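(* Let $(\Omega,\mathcal F)$ be a measurable space, $w$ a capacity, $X$ a bounded measurable function, and $\alpha\in(0,1)$. Then $$\big[\mathrm{VaR}^w_\alpha(X),\overline{\mathrm{VaR}}^w_\alpha(X)\big]=\operatorname*{argmin}_{x\in\mathbb R}\Big\{x+\frac1\alpha\int(X-x)_+\,\mathrm dw\Big\},\qquad \mathrm{ES}^w_\alpha(X)=\min_{x\in\mathbb R}\Big\{x+\frac1\alpha\int(X-x)_+\,\mathrm dw\Big\}.$$
   Context: A capacity is an increasing function $w:\mathcal F\to\mathbb R$ with $w(\varnothing)=0$, $w(\Omega)=1$. For a bounded measurable $Y$, $\int Y\,\mathrm dw=\int_{-\infty}^0(w(Y\ge y)-1)\,\mathrm dy+\int_0^\infty w(Y\ge y)\,\mathrm dy$ (Choquet integral). $\mathrm{VaR}^w_t(X)=\inf\{x\in\mathbb R:w(X\ge x)\le t\}$ and $\overline{\mathrm{VaR}}^w_t(X)=\inf\{x\in\mathbb R:w(X\ge x)<t\}$; $\mathrm{ES}^w_\alpha(X)=\frac1\alpha\int_0^\alpha\mathrm{VaR}^w_t(X)\,\mathrm dt$. $(y)_+=\max(y,0)$. *)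

theory Defs
  imports "HOL-Analysis.Analysis"
begin

definition capacity :: "'a measure \<Rightarrow> ('a set \<Rightarrow> real) \<Rightarrow> bool" where
  "capacity M w \<longleftrightarrow>
     (\<forall>A\<in>sets M. \<forall>B\<in>sets M. A \<subseteq> B \<longrightarrow> w A \<le> w B) \<and>
     w {} = 0 \<and> w (space M) = 1"

definition geset :: "'a measure \<Rightarrow> ('a \<Rightarrow> real) \<Rightarrow> real \<Rightarrow> 'a set" where
  "geset M Y y = {\<omega> \<in> space M. y \<le> Y \<omega>}"

definition choquet :: "'a measure \<Rightarrow> ('a set \<Rightarrow> real) \<Rightarrow> ('a \<Rightarrow> real) \<Rightarrow> real" where
  "choquet M w Y =
     integral {..0} (\<lambda>y. w (geset M Y y) - 1) + integral {0..} (\<lambda>y. w (geset M Y y))"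

definition VaR :: "'a measure \<Rightarrow> ('a set \<Rightarrow> real) \<Rightarrow> real \<Rightarrow> ('a \<Rightarrow> real) \<Rightarrow> real" where
  "VaR M w t X = Inf {x. w (geset M X x) \<le> t}"

definition VaR_upper :: "'a measure \<Rightarrow> ('a set \<Rightarrow> real) \<Rightarrow> real \<Rightarrow> ('a \<Rightarrow> real) \<Rightarrow> real" where
  "VaR_upper M w t X = Inf {x. w (geset M X x) < t}"

definition ES :: "'a measure \<Rightarrow> ('a set \<Rightarrow> real) \<Rightarrow> real \<Rightarrow> ('a \<Rightarrow> real) \<Rightarrow> real" where
  "ES M w \<alpha> X = (1 / \<alpha>) * integral {0..\<alpha>} (\<lambda>t. VaR M w t X)"

definition es_obj :: "'a measure \<Rightarrow> ('a set \<Rightarrow> real) \<Rightarrow> real \<Rightarrow> ('a \<Rightarrow> real) \<Rightarrow> real \<Rightarrow> real" where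
  "es_obj M w \<alpha> X x = x + (1 / \<alpha>) * choquet M w (\<lambda>\<omega>. max (X \<omega> - x) 0)"

end

theory Submission
  imports Defs
begin

(*
  Write f s = w {X \<ge> s}: an antitone function, equal to 1 below and 0 above the range of X.
  The Choquet integral of (X - x)+ is the integral of f over [x, \<infinity>), so the objective
  \<phi> x = x + (1/\<alpha>) \<integral>[x, \<infinity>) f satisfies \<phi> y - \<phi> x = \<integral>[x, y] (1 - f/\<alpha>). Hence \<phi> decreases
  while f > \<alpha> and increases once f < \<alpha>: its minimisers are exactly the points where f crosses
  the level \<alpha>, namely [VaR \<alpha>, upper VaR \<alpha>]. Since t \<mapsto> VaR t is the generalised inverse of f,
  Tonelli gives \<integral>[0, \<alpha>] (VaR t - VaR \<alpha>) dt = \<integral>[VaR \<alpha>, \<infinity>) f, that is ES \<alpha> = \<phi> (VaR \<alpha>).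
*)

lemma antimono_on_integrable_on:
  fixes f :: "real \<Rightarrow> real"
  assumes "antimono_on {c..d} f"
  shows "f integrable_on {c..d}"
proof -
  have "mono_on {c..d} (\<lambda>s. - f s)"
    using assms by (auto simp: monotone_on_def)
  then have "(\<lambda>s. - (- f s)) integrable_on {c..d}"
    by (intro integrable_neg integrable_on_mono_on)
  then show ?thesis by simp
qed

lemma antimono_integrable_on:
  fixes f :: "real \<Rightarrow> real"
  shows "antimono f \<Longrightarrow> f integrable_on {c..d}"
  by (rule antimono_on_integrable_on[OF monotone_on_subset[OF _ subset_UNIV]])

lemma integral_le_const_bound:
  fixes f :: "real \<Rightarrow> real"
  assumes "f integrable_on {x..y}" "x \<le> y" "\<And>s. x < s \<Longrightarrow> s \<le> y \<Longrightarrow> f s \<le> c"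
  shows "integral {x..y} f \<le> (y - x) * c"
proof -
  let ?g = "\<lambda>s. if s = x then c else f s"
  have "integral {x..y} f = integral {x..y} ?g"
    by (rule integral_spike[of "{x}"]) auto
  also have "\<dots> \<le> integral {x..y} (\<lambda>s. c)"
  proof (rule integral_le)
    show "?g integrable_on {x..y}"
      by (rule integrable_spike_finite[of "{x}" _ _ f]) (use assms(1) in auto)
  qed (use assms(3) in auto)
  finally show ?thesis using assms(2) by simp
qed

lemma integral_ge_const_bound:
  fixes f :: "real \<Rightarrow> real"
  assumes "f integrable_on {x..y}" "x \<le> y" "\<And>s. x \<le> s \<Longrightarrow> s < y \<Longrightarrow> c \<le> f s"
  shows "(y - x) * c \<le> integral {x..y} f"
proof -
  let ?g = "\<lambda>s. if s = y then c else f s"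
  have "integral {x..y} (\<lambda>s. c) \<le> integral {x..y} ?g"
  proof (rule integral_le)
    show "?g integrable_on {x..y}"
      by (rule integrable_spike_finite[of "{y}" _ _ f]) (use assms(1) in auto)
  qed (use assms(3) in auto)
  also have "\<dots> = integral {x..y} f"
    by (rule integral_spike[of "{y}"]) auto
  finally show ?thesis using assms(2) by simp
qed

lemma emeasure_lborel_between_intervals:
  fixes S :: "real set"
  assumes "S \<in> sets lborel" "c \<le> d" "{c..<d} \<subseteq> S" "S \<subseteq> {c..d}"
  shows "emeasure lborel S = ennreal (d - c)"
proof (rule antisym)
  have "emeasure lborel S \<le> emeasure lborel {c..d}"
    by (rule emeasure_mono[OF assms(4)]) simp
  then show "emeasure lborel S \<le> ennreal (d - c)"
    using assms(2) by simp
  have "emeasure lborel {c..<d} \<le> emeasure lborel S"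
    by (rule emeasure_mono[OF assms(3,1)])
  then show "ennreal (d - c) \<le> emeasure lborel S"
    using assms(2) by simp
qed

lemma argmin_antimono_slope:
  fixes f \<phi> :: "real \<Rightarrow> real"
  assumes f: "antimono f" and "0 < \<alpha>"
    and diff: "\<And>x y. x \<le> y \<Longrightarrow> \<phi> y - \<phi> x = (y - x) - integral {x..y} f / \<alpha>"
    and below_a: "\<And>s. s < a \<Longrightarrow> \<alpha> < f s"
    and above_a: "\<And>s. a < s \<Longrightarrow> f s \<le> \<alpha>"
    and below_b: "\<And>s. s < b \<Longrightarrow> \<alpha> \<le> f s"
    and above_b: "\<And>s. b < s \<Longrightarrow> f s < \<alpha>"
  shows "{x. \<forall>y. \<phi> x \<le> \<phi> y} = {a..b}"
proof (intro set_eqI iffI)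
  fix x
  assume x_min: "x \<in> {x. \<forall>y. \<phi> x \<le> \<phi> y}"
  show "x \<in> {a..b}"
  proof (rule ccontr)
    assume "x \<notin> {a..b}"
    then consider "x < a" | "b < x" by force
    then obtain y where "\<phi> y < \<phi> x"
    proof cases
      case 1
      define y where "y = (x + a) / 2"
      have xy: "x < y" "y < a" using 1 by (auto simp: y_def)
      have "(y - x) * \<alpha> < (y - x) * f y"
        using xy below_a by simp
      also have "\<dots> \<le> integral {x..y} f"
        using xy by (intro integral_ge_const_bound antimono_integrable_on[OF f] antimonoD[OF f]) auto
      finally have "y - x < integral {x..y} f / \<alpha>"
        using \<open>0 < \<alpha>\<close> by (simp add: less_divide_eq)
      then show ?thesis
        using diff[of x y] xy by (intro that[of y]) simp
    next
      case 2
      define y where "y = (x + b) / 2"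
      have xy: "y < x" "b < y" using 2 by (auto simp: y_def)
      have "integral {y..x} f \<le> (x - y) * f y"
        using xy by (intro integral_le_const_bound antimono_integrable_on[OF f] antimonoD[OF f]) auto
      also have "\<dots> < (x - y) * \<alpha>"
        using xy above_b by simp
      finally have "integral {y..x} f / \<alpha> < x - y"
        using \<open>0 < \<alpha>\<close> by (simp add: divide_less_eq)
      then show ?thesis
        using diff[of y x] xy by (intro that[of y]) simp
    qed
    with x_min show False by (auto simp: not_le[symmetric])
  qed
next
  fix x
  assume x: "x \<in> {a..b}"
  have "\<phi> x \<le> \<phi> y" for y
  proof (cases "x \<le> y")
    case True
    have "integral {x..y} f \<le> (y - x) * \<alpha>"
      using True x above_a by (intro integral_le_const_bound antimono_integrable_on[OF f]) auto
    then have "integral {x..y} f / \<alpha> \<le> y - x"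
      using \<open>0 < \<alpha>\<close> by (simp add: divide_le_eq)
    then show ?thesis
      using diff[OF True] by simp
  next
    case False
    have "(x - y) * \<alpha> \<le> integral {y..x} f"
      using False x below_b by (intro integral_ge_const_bound antimono_integrable_on[OF f]) auto
    then have "x - y \<le> integral {y..x} f / \<alpha>"
      using \<open>0 < \<alpha>\<close> by (simp add: le_divide_eq)
    then show ?thesis
      using diff[of y x] False by simp
  qed
  then show "x \<in> {x. \<forall>y. \<phi> x \<le> \<phi> y}" by simp
qed

lemma integral_generalized_inverse:
  fixes f V :: "real \<Rightarrow> real"
  assumes f: "antimono f" and f_nonneg: "\<And>s. 0 \<le> f s" and "0 < \<alpha>"
    and V_le: "\<And>t. t \<in> {0..\<alpha>} \<Longrightarrow> V t \<le> K"
    and less_V: "\<And>t s. t \<in> {0..\<alpha>} \<Longrightarrow> s < V t \<Longrightarrow> t < f s"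
    and le_V: "\<And>t s. t \<in> {0..\<alpha>} \<Longrightarrow> t < f s \<Longrightarrow> s \<le> V t"
  shows "integral {0..\<alpha>} V = \<alpha> * V \<alpha> + integral {V \<alpha>..K} f"
proof -
  define a where "a = V \<alpha>"
  have V_antimono: "V t' \<le> V t" if "t \<in> {0..\<alpha>}" "t' \<in> {0..\<alpha>}" "t \<le> t'" for t t'
  proof (rule dense_le)
    fix s assume "s < V t'"
    then have "t < f s" using less_V[OF that(2)] that(3) by force
    then show "s \<le> V t" by (rule le_V[OF that(1)])
  qed
  have a_le_V: "a \<le> V t" if "t \<in> {0..\<alpha>}" for t
    using that V_antimono[of t \<alpha>] \<open>0 < \<alpha>\<close> by (simp add: a_def)
  have f_le: "f s \<le> \<alpha>" if "a < s" for s
    using that le_V[of \<alpha> s] \<open>0 < \<alpha>\<close> by (force simp: a_def)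
  have "mono (\<lambda>s. - f s)"
    by (intro monoI) (simp add: antimonoD[OF f])
  then have "(\<lambda>s. - (- f s)) \<in> borel_measurable borel"
    by (intro borel_measurable_uminus borel_measurable_mono)
  then have f_meas[measurable]: "f \<in> borel_measurable borel"
    by simp
  \<comment> \<open>Both sides are the area of R, the region under the graph of min \<alpha> f to the right of a,
    sliced horizontally and vertically (Tonelli).\<close>
  define R where "R = {(t, s). 0 \<le> t \<and> t \<le> \<alpha> \<and> a \<le> s \<and> s \<le> K \<and> t < f s}"
  have R_meas:
    "(\<lambda>(t, s). indicator R (t, s) :: ennreal) \<in> borel_measurable (lborel \<Otimes>\<^sub>M lborel)"
    unfolding R_def by measurable
  have slice_s:
    "(\<integral>\<^sup>+t. indicator R (t, s) \<partial>lborel) = ennreal (min \<alpha> (f s)) * indicator {a..K} s" for s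
  proof (cases "s \<in> {a..K}")
    case True
    have "emeasure lborel {t. 0 \<le> t \<and> t \<le> \<alpha> \<and> t < f s} = ennreal (min \<alpha> (f s) - 0)"
      using f_nonneg[of s] \<open>0 < \<alpha>\<close> by (intro emeasure_lborel_between_intervals) auto
    moreover have
      "(\<lambda>t. indicator R (t, s) :: ennreal) = indicator {t. 0 \<le> t \<and> t \<le> \<alpha> \<and> t < f s}"
      using True by (auto simp: R_def indicator_def)
    ultimately show ?thesis using True by simp
  qed (auto simp: R_def indicator_def)
  have slice_t:
    "(\<integral>\<^sup>+s. indicator R (t, s) \<partial>lborel) = ennreal (V t - a) * indicator {0..\<alpha>} t" for t
  proof (cases "t \<in> {0..\<alpha>}")
    case True
    have "emeasure lborel {s. a \<le> s \<and> s \<le> K \<and> t < f s} = ennreal (V t - a)"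
      using True a_le_V V_le less_V le_V by (intro emeasure_lborel_between_intervals) force+
    moreover have
      "(\<lambda>s. indicator R (t, s) :: ennreal) = indicator {s. a \<le> s \<and> s \<le> K \<and> t < f s}"
      using True by (auto simp: R_def indicator_def)
    ultimately show ?thesis using True by simp
  qed (auto simp: R_def indicator_def)
  have min_integrable: "(\<lambda>s. min \<alpha> (f s)) integrable_on {a..K}"
    by (intro antimono_integrable_on antimonoI min.mono order_refl antimonoD[OF f])
  have V_integrable: "V integrable_on {0..\<alpha>}"
    by (intro antimono_on_integrable_on monotone_onI V_antimono)
  have "ennreal (integral {a..K} (\<lambda>s. min \<alpha> (f s)))
      = (\<integral>\<^sup>+s. ennreal (min \<alpha> (f s)) * indicator {a..K} s \<partial>lborel)"
    using f_nonneg \<open>0 < \<alpha>\<close>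
    by (intro nn_integral_has_integral_lebesgue'[symmetric] integrable_integral min_integrable) auto
  also have "\<dots> = (\<integral>\<^sup>+s. (\<integral>\<^sup>+t. indicator R (t, s) \<partial>lborel) \<partial>lborel)"
    by (simp add: slice_s)
  also have "\<dots> = (\<integral>\<^sup>+t. (\<integral>\<^sup>+s. indicator R (t, s) \<partial>lborel) \<partial>lborel)"
    using lborel_pair.Fubini'[OF R_meas] by simp
  also have "\<dots> = (\<integral>\<^sup>+t. ennreal (V t - a) * indicator {0..\<alpha>} t \<partial>lborel)"
    by (simp add: slice_t)
  also have "\<dots> = ennreal (integral {0..\<alpha>} (\<lambda>t. V t - a))"
    using a_le_V V_integrable
    by (intro nn_integral_has_integral_lebesgue' integrable_integral integrable_diff) auto
  finally have "integral {a..K} (\<lambda>s. min \<alpha> (f s)) = integral {0..\<alpha>} (\<lambda>t. V t - a)"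
  proof (subst (asm) ennreal_inj)
    show "0 \<le> integral {a..K} (\<lambda>s. min \<alpha> (f s))"
      using f_nonneg \<open>0 < \<alpha>\<close> by (intro integral_nonneg min_integrable) auto
    show "0 \<le> integral {0..\<alpha>} (\<lambda>t. V t - a)"
      using a_le_V by (intro integral_nonneg integrable_diff V_integrable) auto
  qed
  moreover have "integral {a..K} (\<lambda>s. min \<alpha> (f s)) = integral {a..K} f"
    by (rule integral_spike[of "{a}"]) (auto intro!: min_absorb2[symmetric] f_le)
  moreover have "integral {0..\<alpha>} (\<lambda>t. V t - a) = integral {0..\<alpha>} V - \<alpha> * a"
    using integral_diff[OF V_integrable integrable_const_ivl[of a 0 \<alpha>]] \<open>0 < \<alpha>\<close> by simp
  ultimately show ?thesis by (simp add: a_def)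
qed

lemma geset_in_sets: "X \<in> borel_measurable M \<Longrightarrow> geset M X s \<in> sets M"
  unfolding geset_def by measurable

lemma capacity_mono:
  "capacity M w \<Longrightarrow> A \<in> sets M \<Longrightarrow> B \<in> sets M \<Longrightarrow> A \<subseteq> B \<Longrightarrow> w A \<le> w B"
  by (simp add: capacity_def)

lemma capacity_nonneg: "capacity M w \<Longrightarrow> A \<in> sets M \<Longrightarrow> 0 \<le> w A"
  using capacity_mono[of M w "{}" A] by (simp add: capacity_def)

lemma antimono_capacity_geset:
  assumes "capacity M w" "X \<in> borel_measurable M"
  shows "antimono (\<lambda>s. w (geset M X s))"
proof (rule antimonoI)
  fix s t :: real
  assume "s \<le> t"
  then have "geset M X t \<subseteq> geset M X s" by (auto simp: geset_def)
  then show "w (geset M X t) \<le> w (geset M X s)"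
    by (rule capacity_mono[OF assms(1) geset_in_sets[OF assms(2)] geset_in_sets[OF assms(2)]])
qed

lemma choquet_pos_part:
  assumes cap: "capacity M w" and X: "X \<in> borel_measurable M"
    and le_K: "\<And>\<omega>. \<omega> \<in> space M \<Longrightarrow> X \<omega> \<le> K" and "x \<le> K"
  shows "choquet M w (\<lambda>\<omega>. max (X \<omega> - x) 0) = integral {x..K} (\<lambda>s. w (geset M X s))"
proof -
  define f where "f = (\<lambda>s. w (geset M X s))"
  define Y where "Y = (\<lambda>\<omega>. max (X \<omega> - x) 0)"
  have Y_nonpos: "geset M Y y = space M" if "y \<le> 0" for y
    using that by (auto simp: geset_def Y_def)
  have Y_pos: "geset M Y y = geset M X (x + y)" if "0 < y" for y
    using that by (auto simp: geset_def Y_def)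
  have f_above: "f s = 0" if "K < s" for s
  proof -
    have "geset M X s = {}" using le_K that by (force simp: geset_def)
    then show ?thesis using cap by (simp add: f_def capacity_def)
  qed
  have "integral {..0} (\<lambda>y. w (geset M Y y) - 1) = integral {..0} (\<lambda>y::real. 0::real)"
    using cap by (intro integral_cong) (simp add: Y_nonpos capacity_def)
  then have negative_part: "integral {..0} (\<lambda>y. w (geset M Y y) - 1) = 0"
    by simp
  have "(f has_integral integral {x..K} f) {0 + x..(K - x) + x}"
    using antimono_capacity_geset[OF cap X]
    by (simp add: f_def integrable_integral antimono_integrable_on)
  then have "((\<lambda>y. f (x + y)) has_integral integral {x..K} f) {0..K - x}"
    by (subst (asm) has_integral_shift_Icc_real[symmetric]) (simp add: comp_def add.commute)
  then have restricted:
    "((\<lambda>y. if y \<in> {0..K - x} then f (x + y) else 0) has_integral integral {x..K} f) {0..}"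
    by (subst has_integral_restrict) auto
  have spike: "w (geset M Y y) = (if y \<in> {0..K - x} then f (x + y) else 0)"
    if "y \<in> {0..} - {0}" for y
    using that f_above[of "x + y"] by (auto simp: Y_pos f_def)
  have "((\<lambda>y. w (geset M Y y)) has_integral integral {x..K} f) {0..}"
    by (rule has_integral_spike_finite[of "{0}", OF _ spike restricted]) simp_all
  then have "integral {0..} (\<lambda>y. w (geset M Y y)) = integral {x..K} f"
    by (rule integral_unique)
  then show ?thesis
    using negative_part by (simp add: choquet_def Y_def f_def)
qed

lemma es_obj_eq_integral:
  assumes "capacity M w" "X \<in> borel_measurable M"
    and "\<And>\<omega>. \<omega> \<in> space M \<Longrightarrow> X \<omega> \<le> K" "x \<le> K"
  shows "es_obj M w \<alpha> X x = x + integral {x..K} (\<lambda>s. w (geset M X s)) / \<alpha>"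
  using choquet_pos_part[OF assms] by (simp add: es_obj_def)

lemma es_obj_diff:
  assumes cap: "capacity M w" and X: "X \<in> borel_measurable M"
    and le_K: "\<And>\<omega>. \<omega> \<in> space M \<Longrightarrow> X \<omega> \<le> K" and "x \<le> y"
  shows "es_obj M w \<alpha> X y - es_obj M w \<alpha> X x
    = (y - x) - integral {x..y} (\<lambda>s. w (geset M X s)) / \<alpha>"
proof -
  define f where "f = (\<lambda>s. w (geset M X s))"
  define K' where "K' = max K y"
  have le_K': "X \<omega> \<le> K'" if "\<omega> \<in> space M" for \<omega>
    using le_K[OF that] by (simp add: K'_def)
  have "antimono f"
    unfolding f_def using cap X by (rule antimono_capacity_geset)
  then have "integral {x..y} f + integral {y..K'} f = integral {x..K'} f"
    using \<open>x \<le> y\<close>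
    by (intro Henstock_Kurzweil_Integration.integral_combine antimono_integrable_on)
      (auto simp: K'_def)
  moreover have "es_obj M w \<alpha> X x = x + integral {x..K'} f / \<alpha>"
    using es_obj_eq_integral[OF cap X le_K', of x] \<open>x \<le> y\<close> by (simp add: K'_def f_def)
  moreover have "es_obj M w \<alpha> X y = y + integral {y..K'} f / \<alpha>"
    using es_obj_eq_integral[OF cap X le_K', of y] by (simp add: K'_def f_def)
  ultimately show ?thesis
    by (simp add: f_def add_divide_distrib[symmetric] algebra_simps)
qed

locale bounded_survival_function =
  fixes f :: "real \<Rightarrow> real" and B :: real
  assumes antimono: "antimono f"
    and nonneg: "0 \<le> f s"
    and eq_one_below: "s \<le> - B \<Longrightarrow> f s = 1"
    and eq_zero_above: "B < s \<Longrightarrow> f s = 0"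
begin

definition quantile :: "real \<Rightarrow> real" where
  "quantile t = Inf {s. f s \<le> t}"

definition quantile_strict :: "real \<Rightarrow> real" where
  "quantile_strict t = Inf {s. f s < t}"

lemma le_level_nonempty: "0 \<le> t \<Longrightarrow> {s. f s \<le> t} \<noteq> {}"
  using eq_zero_above[of "B + 1"] by (auto intro!: exI[of _ "B + 1"])

lemma less_level_nonempty: "0 < t \<Longrightarrow> {s. f s < t} \<noteq> {}"
  using eq_zero_above[of "B + 1"] by (auto intro!: exI[of _ "B + 1"])

lemma bdd_below_le_level: "t < 1 \<Longrightarrow> bdd_below {s. f s \<le> t}"
proof (rule bdd_belowI[of _ "- B"])
  fix s
  show "t < 1 \<Longrightarrow> s \<in> {s. f s \<le> t} \<Longrightarrow> - B \<le> s"
    using eq_one_below[of s] by (cases "s \<le> - B") auto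
qed

lemma bdd_below_less_level: "t \<le> 1 \<Longrightarrow> bdd_below {s. f s < t}"
proof (rule bdd_belowI[of _ "- B"])
  fix s
  show "t \<le> 1 \<Longrightarrow> s \<in> {s. f s < t} \<Longrightarrow> - B \<le> s"
    using eq_one_below[of s] by (cases "s \<le> - B") auto
qed

lemma quantile_less_imp:
  assumes "0 \<le> t" "t < 1" "quantile t < s"
  shows "f s \<le> t"
proof -
  obtain e where "f e \<le> t" "e < s"
    using assms(3) cInf_less_iff[OF le_level_nonempty[OF assms(1)] bdd_below_le_level[OF assms(2)]]
    unfolding quantile_def by blast
  then show ?thesis
    using antimonoD[OF antimono, of e s] by simp
qed

lemma less_quantile_imp:
  assumes "t < 1" "s < quantile t"
  shows "t < f s"
proof (rule ccontr)
  assume "\<not> t < f s"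
  then have "quantile t \<le> s"
    unfolding quantile_def by (intro cInf_lower bdd_below_le_level assms(1)) simp
  with assms(2) show False by simp
qed

lemma le_quantile:
  assumes "0 \<le> t" "t < f s"
  shows "s \<le> quantile t"
  unfolding quantile_def
proof (rule cInf_greatest)
  show "{s. f s \<le> t} \<noteq> {}"
    using assms(1) by (rule le_level_nonempty)
  fix e
  assume "e \<in> {s. f s \<le> t}"
  then show "s \<le> e"
    using assms(2) antimonoD[OF antimono, of e s] by force
qed

lemma quantile_le_bound:
  assumes "0 \<le> t" "t < 1"
  shows "quantile t \<le> B"
proof (rule dense_ge)
  fix s
  assume "B < s"
  then show "quantile t \<le> s"
    unfolding quantile_def
    using assms eq_zero_above by (intro cInf_lower bdd_below_le_level) auto
qed

lemma quantile_strict_less_imp: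
  assumes "0 < t" "t \<le> 1" "quantile_strict t < s"
  shows "f s < t"
proof -
  obtain e where "f e < t" "e < s"
    using assms(3) cInf_less_iff[OF less_level_nonempty[OF assms(1)] bdd_below_less_level[OF assms(2)]]
    unfolding quantile_strict_def by blast
  then show ?thesis
    using antimonoD[OF antimono, of e s] by simp
qed

lemma less_quantile_strict_imp:
  assumes "t \<le> 1" "s < quantile_strict t"
  shows "t \<le> f s"
proof (rule ccontr)
  assume "\<not> t \<le> f s"
  then have "quantile_strict t \<le> s"
    unfolding quantile_strict_def by (intro cInf_lower bdd_below_less_level assms(1)) simp
  with assms(2) show False by simp
qed

lemma quantile_le_quantile_strict:
  assumes "0 < t" "t < 1"
  shows "quantile t \<le> quantile_strict t"
  unfolding quantile_def quantile_strict_def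
  using less_level_nonempty[OF assms(1)] bdd_below_le_level[OF assms(2)]
  by (rule cInf_superset_mono) auto

lemma argmin_eq_quantile_interval:
  fixes \<phi> :: "real \<Rightarrow> real"
  assumes "0 < \<alpha>" "\<alpha> < 1"
    and "\<And>x y. x \<le> y \<Longrightarrow> \<phi> y - \<phi> x = (y - x) - integral {x..y} f / \<alpha>"
  shows "{x. \<forall>y. \<phi> x \<le> \<phi> y} = {quantile \<alpha>..quantile_strict \<alpha>}"
proof (rule argmin_antimono_slope[OF antimono assms(1,3)])
  fix s
  show "s < quantile \<alpha> \<Longrightarrow> \<alpha> < f s"
    using assms(2) by (rule less_quantile_imp)
  show "quantile \<alpha> < s \<Longrightarrow> f s \<le> \<alpha>"
    using assms(1,2) by (intro quantile_less_imp) auto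
  show "s < quantile_strict \<alpha> \<Longrightarrow> \<alpha> \<le> f s"
    using assms(2) by (intro less_quantile_strict_imp) auto
  show "quantile_strict \<alpha> < s \<Longrightarrow> f s < \<alpha>"
    using assms(1,2) by (intro quantile_strict_less_imp) auto
qed

lemma integral_quantile:
  assumes "0 < \<alpha>" "\<alpha> < 1" "B \<le> K"
  shows "integral {0..\<alpha>} quantile = \<alpha> * quantile \<alpha> + integral {quantile \<alpha>..K} f"
proof (rule integral_generalized_inverse[OF antimono nonneg assms(1)])
  fix t s
  assume t: "t \<in> {0..\<alpha>}"
  then show "quantile t \<le> K"
    using assms quantile_le_bound[of t] by auto
  show "s < quantile t \<Longrightarrow> t < f s"
    using t assms(2) by (intro less_quantile_imp) auto
  show "t < f s \<Longrightarrow> s \<le> quantile t"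
    using t by (intro le_quantile) auto
qed

end

lemma bounded_survival_function_geset:
  assumes cap: "capacity M w" and X: "X \<in> borel_measurable M"
    and bound: "\<And>\<omega>. \<omega> \<in> space M \<Longrightarrow> \<bar>X \<omega>\<bar> \<le> B"
  shows "bounded_survival_function (\<lambda>s. w (geset M X s)) B"
proof
  show "antimono (\<lambda>s. w (geset M X s))"
    using cap X by (rule antimono_capacity_geset)
  fix s
  show "0 \<le> w (geset M X s)"
    using cap geset_in_sets[OF X] by (rule capacity_nonneg)
  show "w (geset M X s) = 1" if "s \<le> - B"
  proof -
    have "geset M X s = space M" using bound that by (force simp: geset_def)
    then show ?thesis using cap by (simp add: capacity_def)
  qed
  show "w (geset M X s) = 0" if "B < s"
  proof -
    have "geset M X s = {}" using bound that by (force simp: geset_def)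
    then show ?thesis using cap by (simp add: capacity_def)
  qed
qed

theorem theorem3:
  fixes M :: "'a measure" and w :: "'a set \<Rightarrow> real" and X :: "'a \<Rightarrow> real" and \<alpha> :: real
  assumes "capacity M w"
    and "X \<in> borel_measurable M"
    and "\<exists>B. \<forall>\<omega>\<in>space M. \<bar>X \<omega>\<bar> \<le> B"
    and "0 < \<alpha>" and "\<alpha> < 1"
  shows "{VaR M w \<alpha> X .. VaR_upper M w \<alpha> X} = {x. \<forall>y. es_obj M w \<alpha> X x \<le> es_obj M w \<alpha> X y}
     \<and> ES M w \<alpha> X \<in> range (es_obj M w \<alpha> X)
     \<and> (\<forall>y. ES M w \<alpha> X \<le> es_obj M w \<alpha> X y)"
proof -
  obtain B where B: "\<And>\<omega>. \<omega> \<in> space M \<Longrightarrow> \<bar>X \<omega>\<bar> \<le> B"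
    using assms(3) by blast
  then have X_le: "\<And>\<omega>. \<omega> \<in> space M \<Longrightarrow> X \<omega> \<le> B"
    by fastforce
  interpret bounded_survival_function "\<lambda>s. w (geset M X s)" B
    using assms(1,2) B by (rule bounded_survival_function_geset)
  have VaR_eq: "VaR M w t X = quantile t" "VaR_upper M w t X = quantile_strict t" for t
    by (simp_all add: VaR_def VaR_upper_def quantile_def quantile_strict_def)
  have argmin:
    "{x. \<forall>y. es_obj M w \<alpha> X x \<le> es_obj M w \<alpha> X y} = {quantile \<alpha>..quantile_strict \<alpha>}"
    using assms(4,5) es_obj_diff[OF assms(1,2) X_le] by (rule argmin_eq_quantile_interval)
  have "ES M w \<alpha> X = es_obj M w \<alpha> X (quantile \<alpha>)"
    using assms(4,5) integral_quantile[of \<alpha> B] quantile_le_bound[of \<alpha>]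
      es_obj_eq_integral[OF assms(1,2) X_le, of "quantile \<alpha>"]
    by (simp add: ES_def VaR_eq field_simps)
  moreover have "quantile \<alpha> \<le> quantile_strict \<alpha>"
    using assms(4,5) by (rule quantile_le_quantile_strict)
  ultimately show ?thesis
    using argmin by (auto simp: VaR_eq)
qed

end
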